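(* Let $\varepsilon>0$, $\alpha=\varepsilon/(2M)$, $\eta=\alpha/(L+\alpha)$, and $z_0\in\mathrm{dom}\, f^*$. Run GCG: for $k\ge0$, $\bar z_k=\mathrm{argmin}_{v\in\mathbb{R}^n}\{\langle-\nabla(h^\alpha)^*(-z_k),v\rangle+f^*(v)\}$ and $z_{k+1}=\eta\bar z_k+(1-\eta)z_k$. Let $\Gamma_k^*(v)=(h^\alpha)^*(-z_k)+\langle-\nabla(h^\alpha)^*(-z_k),v-z_k\rangle+f^*(v)$ be the single-cutting-plane model of the dual problem induced by $z_k$. Then the pair $(z_k,\Gamma_k^* )$ is an $\varepsilon$-certificate, i.e., $\psi^\alpha(z_k)-\min_{v\in\mathbb{R}^n}\Gamma_k^*(v)\le\varepsilon/2$, after $k=\tilde{\mathcal{O}}(1+ML\varepsilon^{-1})$ iterations.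
   Context: Let $\|\cdot\|$ be a norm on $\mathbb{R}^n$ with dual norm $\|\cdot\|_*$. Let $f:\mathbb{R}^n\to\mathbb{R}$ be convex, differentiable and $L$-smooth ($L>0$) with respect to $\|\cdot\|$, $h:\mathbb{R}^n\to(-\infty,\infty]$ closed proper convex with bounded domain, and $w:\mathbb{R}^n\to[0,+\infty]$ closed, $1$-strongly convex with respect to $\|\cdot\|$ on $\mathrm{dom}\, h$, with $M:=\max_{x\in\mathrm{dom}\, h}w(x)<\infty$. Let $h^\alpha=h+\alpha w$ and $\psi^\alpha(z)=(h^\alpha)^*(-z)+f^*(z)$, where $^*$ denotes convex conjugate ($(h^\alpha)^*$ is differentiable with $(1/\alpha)$-Lipschitz gradient, $f^*$ is $(1/L)$-strongly convex w.r.t. $\|\cdot\|_*$). The dual problem is $\min_z\psi^\alpha(z)$, and it is Fenchel dual to $\min_x f(x)+h^\alpha(x)$; a dual $\varepsilon$-certificate (with $\alpha\le\varepsilon/(2M)$) is a pair $(z,\Gamma^* )$ with $\psi^\alpha(z)-\min\Gamma^*\le\varepsilon/2$. The notation $\tilde{\mathcal{O}}$ hides logarithmic factors (in $\varepsilon$ and initial gaps). *)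

theory Defs
  imports "HOL-Analysis.Analysis"
begin

definition is_norm :: "(real^'n \<Rightarrow> real) \<Rightarrow> bool" where
  "is_norm N \<longleftrightarrow> (\<forall>x. 0 \<le> N x) \<and> (\<forall>x. N x = 0 \<longleftrightarrow> x = 0)
     \<and> (\<forall>c x. N (c *\<^sub>R x) = \<bar>c\<bar> * N x) \<and> (\<forall>x y. N (x + y) \<le> N x + N y)"

definition dual_norm :: "(real^'n \<Rightarrow> real) \<Rightarrow> real^'n \<Rightarrow> real" where
  "dual_norm N y = Sup {y \<bullet> x | x. N x \<le> 1}"

definition edom :: "(real^'n \<Rightarrow> ereal) \<Rightarrow> (real^'n) set" where
  "edom F = {x. F x < \<infinity>}"

definition conj :: "(real^'n \<Rightarrow> ereal) \<Rightarrow> real^'n \<Rightarrow> ereal" where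
  "conj F y = (SUP x. ereal (y \<bullet> x) - F x)"

definition epi :: "(real^'n \<Rightarrow> ereal) \<Rightarrow> ((real^'n) \<times> real) set" where
  "epi F = {(x, t). F x \<le> ereal t}"

definition econvex :: "(real^'n \<Rightarrow> ereal) \<Rightarrow> bool" where
  "econvex F \<longleftrightarrow> convex (epi F)"

definition eclosed :: "(real^'n \<Rightarrow> ereal) \<Rightarrow> bool" where
  "eclosed F \<longleftrightarrow> closed (epi F)"

definition eproper :: "(real^'n \<Rightarrow> ereal) \<Rightarrow> bool" where
  "eproper F \<longleftrightarrow> (\<forall>x. F x \<noteq> -\<infinity>) \<and> (\<exists>x. F x < \<infinity>)"

definition grad :: "(real^'n \<Rightarrow> real) \<Rightarrow> real^'n \<Rightarrow> real^'n" where
  "grad F x = (SOME g. (F has_derivative (\<lambda>d. g \<bullet> d)) (at x))"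

definition strongly_convex_on :: "(real^'n \<Rightarrow> real) \<Rightarrow> real \<Rightarrow> (real^'n) set \<Rightarrow> (real^'n \<Rightarrow> ereal) \<Rightarrow> bool" where
  "strongly_convex_on N \<mu> S F \<longleftrightarrow> convex S \<and>
     (\<forall>x\<in>S. \<forall>y\<in>S. \<forall>t::real. 0 \<le> t \<and> t \<le> 1 \<longrightarrow>
        F (t *\<^sub>R x + (1 - t) *\<^sub>R y) \<le>
          ereal t * F x + ereal (1 - t) * F y - ereal (\<mu> / 2 * t * (1 - t) * (N (x - y))\<^sup>2))"

end

theory Submission
  imports Defs
begin

(* The dual objective is psi = Phi + F with Phi v = (h^alpha)^*(-v) and F = f^*.
   Strong convexity of w makes (h^alpha)^* differentiable with (1/alpha)-Lipschitz gradient
   (the gradient is the maximiser in the definition of the conjugate), and L-smoothness of f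
   makes f^* (1/L)-strongly convex, both with respect to the dual norm.  For the step
   eta = alpha / (L + alpha) these two curvature bounds balance, so one GCG step decreases psi
   by eta times the gap psi(z_k) - min Gamma_k, and this gap dominates psi(z_k) - min psi.
   Hence the gap contracts geometrically with ratio 1 - eta = 1 - 1 / (1 + 2ML/epsilon). *)

section \<open>Norms on R^n and their duals\<close>

locale general_norm =
  fixes N :: "real^'n \<Rightarrow> real"
  assumes is_norm: "is_norm N"
begin

lemma nonneg: "0 \<le> N x"
  and eq_0_iff: "N x = 0 \<longleftrightarrow> x = 0"
  and scaleR: "N (c *\<^sub>R x) = \<bar>c\<bar> * N x"
  and triangle: "N (x + y) \<le> N x + N y"
  using is_norm unfolding is_norm_def by blast+

lemma zero [simp]: "N 0 = 0"
  using eq_0_iff by blast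

lemma minus: "N (- x) = N x"
  using scaleR[of "-1" x] by simp

lemma commute: "N (x - y) = N (y - x)"
  using minus[of "x - y"] by simp

lemma sum_le: "N (\<Sum>i\<in>S. g i) \<le> (\<Sum>i\<in>S. N (g i))"
proof (induction S rule: infinite_finite_induct)
  case (insert a S)
  then show ?case using triangle[of "g a" "sum g S"] by simp
qed simp_all

lemma le_norm: "\<exists>K>0. \<forall>x. N x \<le> K * norm x"
proof (intro exI conjI allI)
  let ?K = "1 + (\<Sum>b\<in>Basis. N b)"
  show "?K > 0" by (simp add: add_pos_nonneg sum_nonneg nonneg)
  fix x :: "real^'n"
  have "N x = N (\<Sum>b\<in>Basis. (x \<bullet> b) *\<^sub>R b)" by (simp add: euclidean_representation)
  also have "\<dots> \<le> (\<Sum>b\<in>Basis. \<bar>x \<bullet> b\<bar> * N b)"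
    using sum_le[of "\<lambda>b. (x \<bullet> b) *\<^sub>R b" Basis] by (simp add: scaleR)
  also have "\<dots> \<le> (\<Sum>b\<in>Basis. norm x * N b)"
    by (intro sum_mono mult_right_mono) (auto simp: Basis_le_norm nonneg)
  also have "\<dots> \<le> ?K * norm x" by (simp add: sum_distrib_left algebra_simps)
  finally show "N x \<le> ?K * norm x" .
qed

lemma continuous_on: "continuous_on S N"
proof -
  obtain K where K: "K > 0" "\<And>x. N x \<le> K * norm x" using le_norm by blast
  have "dist (N x) (N y) \<le> K * dist x y" for x y
    using triangle[of y "x - y"] triangle[of x "y - x"] K(2)[of "x - y"] K(2)[of "y - x"]
    by (simp add: dist_real_def dist_norm norm_minus_commute)
  then have "K-lipschitz_on S N" using K(1) by (intro lipschitz_onI) auto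
  then show ?thesis by (rule lipschitz_on_continuous_on)
qed

lemma norm_le: "\<exists>c>0. \<forall>x. c * norm x \<le> N x"
proof -
  have "sphere (0::real^'n) 1 \<noteq> {}" using vector_choose_size[of 1] by auto
  then obtain x0 where x0: "x0 \<in> sphere 0 1" and min: "\<And>y. y \<in> sphere 0 1 \<Longrightarrow> N x0 \<le> N y"
    using continuous_attains_inf[OF compact_sphere _ continuous_on] by blast
  have pos: "N x0 > 0" using x0 nonneg[of x0] eq_0_iff[of x0] by fastforce
  have "N x0 * norm x \<le> N x" for x
  proof (cases "x = 0")
    case False
    then have "N x0 \<le> N ((1 / norm x) *\<^sub>R x)" by (intro min) simp
    then show ?thesis using False by (simp add: scaleR field_simps)
  qed simp
  then show ?thesis using pos by blast
qed

lemma compact_unit_ball: "compact {x. N x \<le> 1}"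
proof -
  obtain c where c: "c > 0" "\<And>x. c * norm x \<le> N x" using norm_le by blast
  have "norm x \<le> 1 / c" if "N x \<le> 1" for x
    using c order_trans[OF c(2) that] by (simp add: field_simps)
  then have "bounded {x. N x \<le> 1}" by (auto intro: boundedI)
  moreover have "closed {x. N x \<le> 1}" by (intro closed_Collect_le continuous_on continuous_intros)
  ultimately show ?thesis by (simp add: compact_eq_bounded_closed)
qed

lemma dual_norm_attained:
  "\<exists>v. N v \<le> 1 \<and> dual_norm N a = a \<bullet> v \<and> (\<forall>x. N x \<le> 1 \<longrightarrow> a \<bullet> x \<le> a \<bullet> v)"
proof -
  have "{x. N x \<le> 1} \<noteq> {}" using zero by (metis empty_iff mem_Collect_eq zero_le_one)
  moreover have "continuous_on {x. N x \<le> 1} (inner a)" by (intro continuous_intros)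
  ultimately obtain v where "N v \<le> 1" and max: "\<forall>x. N x \<le> 1 \<longrightarrow> a \<bullet> x \<le> a \<bullet> v"
    using continuous_attains_sup[OF compact_unit_ball] by blast
  moreover have "dual_norm N a = a \<bullet> v"
    unfolding dual_norm_def using calculation by (intro cSup_eq_maximum) auto
  ultimately show ?thesis by blast
qed

lemma inner_le_dual_norm: "a \<bullet> x \<le> dual_norm N a" if "N x \<le> 1"
  using dual_norm_attained[of a] that by auto

lemma inner_le_dual_norm_mult: "a \<bullet> x \<le> dual_norm N a * N x"
proof (cases "x = 0")
  case False
  then have pos: "N x > 0" using nonneg[of x] eq_0_iff[of x] by fastforce
  have "a \<bullet> ((1 / N x) *\<^sub>R x) \<le> dual_norm N a"
    using pos by (intro inner_le_dual_norm) (simp add: scaleR)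
  then show ?thesis using pos by (simp add: field_simps)
qed simp

lemma dual_norm_nonneg: "0 \<le> dual_norm N a"
  using inner_le_dual_norm[of 0 a] by simp

lemma dual_norm_scaleR_le: "dual_norm N (c *\<^sub>R a) \<le> \<bar>c\<bar> * dual_norm N a"
proof -
  obtain u where u: "N u \<le> 1" "dual_norm N (c *\<^sub>R a) = (c *\<^sub>R a) \<bullet> u"
    using dual_norm_attained by blast
  have "N (sgn c *\<^sub>R u) \<le> 1" using u(1) by (simp add: scaleR abs_sgn_eq)
  then have "sgn c * (a \<bullet> u) \<le> dual_norm N a" using inner_le_dual_norm[of "sgn c *\<^sub>R u" a] by simp
  then have "\<bar>c\<bar> * (sgn c * (a \<bullet> u)) \<le> \<bar>c\<bar> * dual_norm N a" by (rule mult_left_mono) simp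
  then show ?thesis using u(2) by (simp add: mult.assoc[symmetric] abs_mult_sgn)
qed

lemma dual_norm_scaleR: "dual_norm N (c *\<^sub>R a) = \<bar>c\<bar> * dual_norm N a"
proof (cases "c = 0")
  case True
  then show ?thesis using dual_norm_scaleR_le[of 0 a] dual_norm_nonneg[of 0] by simp
next
  case False
  have "dual_norm N a \<le> \<bar>1 / c\<bar> * dual_norm N (c *\<^sub>R a)"
    using dual_norm_scaleR_le[of "1 / c" "c *\<^sub>R a"] False by simp
  then have "\<bar>c\<bar> * dual_norm N a \<le> dual_norm N (c *\<^sub>R a)" using False by (simp add: field_simps)
  then show ?thesis using dual_norm_scaleR_le[of c a] by linarith
qed

lemma dual_norm_triangle: "dual_norm N (a + b) \<le> dual_norm N a + dual_norm N b"
proof -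
  obtain v where "N v \<le> 1" "dual_norm N (a + b) = (a + b) \<bullet> v" using dual_norm_attained by blast
  then show ?thesis using inner_le_dual_norm[of v a] inner_le_dual_norm[of v b] by (simp add: inner_add_left)
qed

lemma dual_norm_eq_0_iff: "dual_norm N a = 0 \<longleftrightarrow> a = 0"
proof
  assume "dual_norm N a = 0"
  then have "a \<bullet> a \<le> 0" using inner_le_dual_norm_mult[of a a] by simp
  then show "a = 0" by (metis inner_gt_zero_iff not_less)
qed (use dual_norm_scaleR[of 0 0] in simp)

lemma general_norm_dual_norm: "general_norm (dual_norm N)"
  unfolding general_norm_def is_norm_def
  using dual_norm_nonneg dual_norm_eq_0_iff dual_norm_scaleR dual_norm_triangle by blast

lemma dual_norm_le_norm: "\<exists>C>0. \<forall>a. dual_norm N a \<le> C * norm a"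
proof -
  obtain c where c: "c > 0" "\<And>x. c * norm x \<le> N x" using norm_le by blast
  have "dual_norm N a \<le> (1 / c) * norm a" for a
  proof -
    obtain v where v: "N v \<le> 1" "dual_norm N a = a \<bullet> v" using dual_norm_attained by blast
    have "norm v \<le> 1 / c" using c order_trans[OF c(2) v(1)] by (simp add: field_simps)
    then have "a \<bullet> v \<le> norm a * (1 / c)"
      using norm_cauchy_schwarz[of a v] by (meson mult_left_mono norm_ge_zero order_trans)
    then show ?thesis using v by simp
  qed
  then show ?thesis using c(1) by (intro exI[of _ "1 / c"]) simp
qed

end

section \<open>Smooth functions and their conjugates\<close>

lemma grad_has_derivative:
  assumes "F differentiable (at x)"
  shows "(F has_derivative (\<lambda>d. grad F x \<bullet> d)) (at x)"
proof -
  obtain D where D: "(F has_derivative D) (at x)" using assms unfolding differentiable_def by blast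
  then have "D = (\<lambda>d. adjoint D 1 \<bullet> d)"
    using adjoint_works[OF has_derivative_linear[OF D]] by (auto simp: inner_commute)
  then have "\<exists>g. (F has_derivative (\<lambda>d. g \<bullet> d)) (at x)" using D by metis
  then show ?thesis unfolding grad_def by (rule someI_ex)
qed

lemma grad_eqI:
  assumes "(F has_derivative (\<lambda>d. a \<bullet> d)) (at x)"
  shows "grad F x = a"
proof -
  have "(\<lambda>d. grad F x \<bullet> d) = (\<lambda>d. a \<bullet> d)"
    using has_derivative_unique grad_has_derivative assms differentiableI by blast
  then have "(grad F x - a) \<bullet> (grad F x - a) = 0" by (metis inner_diff_left right_minus_eq)
  then show ?thesis by simp
qed

lemma conj_ge: "ereal (y \<bullet> x) - F x \<le> conj F y"
  unfolding conj_def by (rule SUP_upper) simp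

lemma conj_real_not_minf: "conj (\<lambda>x. ereal (f x)) y \<noteq> -\<infinity>"
  using conj_ge[of y 0 "\<lambda>x. ereal (f x)"] by auto

lemma convex_comb_sq_le:
  fixes t A B D :: real
  assumes "0 \<le> t" "t \<le> 1" "0 \<le> D" "D \<le> A + B"
  shows "t * (1 - t) * D\<^sup>2 \<le> t * A\<^sup>2 + (1 - t) * B\<^sup>2"
proof -
  have "t * (1 - t) * D\<^sup>2 \<le> t * (1 - t) * (A + B)\<^sup>2"
    using assms by (intro mult_left_mono power_mono) auto
  also have "\<dots> = t * A\<^sup>2 + (1 - t) * B\<^sup>2 - (t * A - (1 - t) * B)\<^sup>2"
    by (simp add: power2_eq_square algebra_simps)
  finally show ?thesis using zero_le_power2[of "t * A - (1 - t) * B"] by linarith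
qed

locale smooth_function = general_norm N for N :: "real^'n \<Rightarrow> real" +
  fixes f :: "real^'n \<Rightarrow> real" and L :: real
  assumes differentiable: "\<And>x. f differentiable (at x)"
    and grad_lipschitz: "\<And>x y. dual_norm N (grad f x - grad f y) \<le> L * N (x - y)"
    and L_pos: "L > 0"
begin

lemma descent_lemma: "f (x + u) \<le> f x + grad f x \<bullet> u + L / 2 * (N u)\<^sup>2"
proof -
  define \<phi> where "\<phi> s = f (x + s *\<^sub>R u) - s * (grad f x \<bullet> u) - L / 2 * s\<^sup>2 * (N u)\<^sup>2" for s
  have deriv: "(\<phi> has_real_derivative (grad f (x + s *\<^sub>R u) - grad f x) \<bullet> u - L * s * (N u)\<^sup>2) (at s)"
    for s
  proof -
    have "((\<lambda>s. f (x + s *\<^sub>R u)) has_derivative (\<lambda>r. grad f (x + s *\<^sub>R u) \<bullet> (r *\<^sub>R u))) (at s)"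
      by (rule has_derivative_compose[OF _ grad_has_derivative[OF differentiable]])
        (auto intro!: derivative_eq_intros)
    then have "((\<lambda>s. f (x + s *\<^sub>R u)) has_real_derivative grad f (x + s *\<^sub>R u) \<bullet> u) (at s)"
      by (rule has_derivative_imp_has_field_derivative) simp
    then show ?thesis
      unfolding \<phi>_def by (auto intro!: derivative_eq_intros simp: inner_diff_left)
  qed
  have "\<phi> 1 \<le> \<phi> 0"
  proof (rule DERIV_nonpos_imp_nonincreasing[of 0 1 \<phi>])
    fix s :: real assume s: "0 \<le> s" "s \<le> 1"
    have "(grad f (x + s *\<^sub>R u) - grad f x) \<bullet> u \<le> dual_norm N (grad f (x + s *\<^sub>R u) - grad f x) * N u"
      by (rule inner_le_dual_norm_mult)
    also have "\<dots> \<le> L * N (s *\<^sub>R u) * N u"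
      using grad_lipschitz[of "x + s *\<^sub>R u" x] nonneg[of u] by (simp add: mult_right_mono)
    finally have "(grad f (x + s *\<^sub>R u) - grad f x) \<bullet> u - L * s * (N u)\<^sup>2 \<le> 0"
      using s by (simp add: scaleR power2_eq_square mult_ac)
    then show "\<exists>y. (\<phi> has_real_derivative y) (at s) \<and> y \<le> 0" using deriv by blast
  qed simp
  then show ?thesis unfolding \<phi>_def by simp
qed

lemma conj_ge_dual_norm_sq:
  "ereal (s \<bullet> x - f x + (dual_norm N (s - grad f x))\<^sup>2 / (2 * L)) \<le> conj (\<lambda>x. ereal (f x)) s"
proof -
  define a where "a = s - grad f x"
  obtain v where v: "N v \<le> 1" "dual_norm N a = a \<bullet> v" using dual_norm_attained by blast
  define u where "u = (dual_norm N a / L) *\<^sub>R v"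
  have au: "a \<bullet> u = (dual_norm N a)\<^sup>2 / L" unfolding u_def using v(2) by (simp add: power2_eq_square)
  have "N u \<le> dual_norm N a / L"
    using v(1) dual_norm_nonneg[of a] L_pos unfolding u_def
    by (simp add: scaleR mult_left_le divide_right_mono)
  then have "L / 2 * (N u)\<^sup>2 \<le> L / 2 * (dual_norm N a / L)\<^sup>2"
    using nonneg[of u] L_pos by (intro mult_left_mono power_mono) auto
  also have "\<dots> = (dual_norm N a)\<^sup>2 / (2 * L)" using L_pos by (simp add: power2_eq_square)
  also have "\<dots> = a \<bullet> u - (dual_norm N a)\<^sup>2 / (2 * L)" using L_pos au by (simp add: field_simps)
  finally have "(dual_norm N a)\<^sup>2 / (2 * L) \<le> a \<bullet> u - L / 2 * (N u)\<^sup>2" by linarith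
  then have "s \<bullet> x - f x + (dual_norm N a)\<^sup>2 / (2 * L) \<le> s \<bullet> (x + u) - f (x + u)"
    using descent_lemma[of x u] unfolding a_def by (simp add: inner_add_right inner_diff_left)
  also have "ereal \<dots> \<le> conj (\<lambda>x. ereal (f x)) s" using conj_ge[of s "x + u" "\<lambda>x. ereal (f x)"] by simp
  finally show ?thesis unfolding a_def by simp
qed

lemma conj_strongly_convex_finite:
  assumes s: "conj (\<lambda>x. ereal (f x)) s1 = ereal a" "conj (\<lambda>x. ereal (f x)) s2 = ereal b"
    and t: "0 \<le> t" "t \<le> 1"
  shows "conj (\<lambda>x. ereal (f x)) (t *\<^sub>R s1 + (1 - t) *\<^sub>R s2)
    \<le> ereal (t * a + (1 - t) * b - 1 / L / 2 * t * (1 - t) * (dual_norm N (s1 - s2))\<^sup>2)"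
  unfolding conj_def
proof (rule SUP_least)
  fix x
  define A where "A = dual_norm N (s1 - grad f x)"
  define B where "B = dual_norm N (s2 - grad f x)"
  define D where "D = dual_norm N (s1 - s2)"
  have "D \<le> A + B"
    using general_norm.triangle[OF general_norm_dual_norm, of "s1 - grad f x" "grad f x - s2"]
      general_norm.commute[OF general_norm_dual_norm, of s2 "grad f x"]
    unfolding A_def B_def D_def by simp
  then have "t * (1 - t) * D\<^sup>2 \<le> t * A\<^sup>2 + (1 - t) * B\<^sup>2"
    using t dual_norm_nonneg unfolding D_def by (intro convex_comb_sq_le) auto
  moreover have "s1 \<bullet> x - f x \<le> a - A\<^sup>2 / (2 * L)" "s2 \<bullet> x - f x \<le> b - B\<^sup>2 / (2 * L)"
    using conj_ge_dual_norm_sq[of s1 x] conj_ge_dual_norm_sq[of s2 x] s unfolding A_def B_def by simp_all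
  ultimately have "t * (s1 \<bullet> x - f x) + (1 - t) * (s2 \<bullet> x - f x)
      \<le> t * (a - A\<^sup>2 / (2 * L)) + (1 - t) * (b - B\<^sup>2 / (2 * L))"
    using t by (intro add_mono mult_left_mono) auto
  also have "\<dots> = t * a + (1 - t) * b - (t * A\<^sup>2 + (1 - t) * B\<^sup>2) / (2 * L)"
    by (simp add: diff_divide_distrib add_divide_distrib algebra_simps)
  also have "\<dots> \<le> t * a + (1 - t) * b - 1 / L / 2 * t * (1 - t) * D\<^sup>2"
    using divide_right_mono[OF \<open>t * (1 - t) * D\<^sup>2 \<le> _\<close>, of "2 * L"] L_pos by simp
  finally have "t * (s1 \<bullet> x - f x) + (1 - t) * (s2 \<bullet> x - f x)
      \<le> t * a + (1 - t) * b - 1 / L / 2 * t * (1 - t) * D\<^sup>2" .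
  then show "ereal ((t *\<^sub>R s1 + (1 - t) *\<^sub>R s2) \<bullet> x) - ereal (f x)
      \<le> ereal (t * a + (1 - t) * b - 1 / L / 2 * t * (1 - t) * D\<^sup>2)"
    by (simp add: inner_add_left algebra_simps)
qed

lemma conj_strongly_convex: "strongly_convex_on (dual_norm N) (1 / L) UNIV (conj (\<lambda>x. ereal (f x)))"
  unfolding strongly_convex_on_def
proof (intro conjI ballI allI impI convex_UNIV)
  let ?F = "conj (\<lambda>x. ereal (f x))"
  fix s1 s2 :: "real^'n" and t :: real assume t: "0 \<le> t \<and> t \<le> 1"
  consider "?F s1 \<noteq> \<infinity>" "?F s2 \<noteq> \<infinity>" | "t = 0" | "t = 1"
    | "0 < t" "t < 1" "?F s1 = \<infinity> \<or> ?F s2 = \<infinity>"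
    using t by fastforce
  then show "?F (t *\<^sub>R s1 + (1 - t) *\<^sub>R s2)
      \<le> ereal t * ?F s1 + ereal (1 - t) * ?F s2 - ereal (1 / L / 2 * t * (1 - t) * (dual_norm N (s1 - s2))\<^sup>2)"
  proof cases
    case 1
    obtain a where "?F s1 = ereal a" using 1 conj_real_not_minf[of f s1] by (cases "?F s1") auto
    moreover obtain b where "?F s2 = ereal b" using 1 conj_real_not_minf[of f s2] by (cases "?F s2") auto
    ultimately show ?thesis using conj_strongly_convex_finite[of s1 a s2 b t] t by simp
  next
    case 4
    then have infinite: "ereal t * ?F s1 + ereal (1 - t) * ?F s2 = \<infinity>"
      using conj_real_not_minf[of f s1] conj_real_not_minf[of f s2]
      by (cases "?F s1"; cases "?F s2") auto
    show ?thesis unfolding infinite by simp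
  qed (simp_all add: zero_ereal_def[symmetric])
qed

end

section \<open>The regularised conjugate\<close>

lemma has_derivative_of_quadratic_bound:
  fixes F :: "'a::real_normed_vector \<Rightarrow> real"
  assumes "bounded_linear D" and bound: "\<And>y. \<bar>F y - F x - D (y - x)\<bar> \<le> K * (norm (y - x))\<^sup>2"
  shows "(F has_derivative D) (at x)"
proof -
  have "norm ((F y - F x - D (y - x)) /\<^sub>R norm (y - x)) \<le> K * norm (y - x)" for y
  proof (cases "y = x")
    case False
    then have "\<bar>F y - F x - D (y - x)\<bar> / norm (y - x) \<le> K * norm (y - x)"
      using bound[of y] by (simp add: divide_le_eq power2_eq_square mult.assoc)
    then show ?thesis by (simp add: abs_mult divide_inverse_commute)
  qed simp
  then have "\<forall>\<^sub>F y in at x. norm ((F y - F x - D (y - x)) /\<^sub>R norm (y - x)) \<le> K * norm (y - x)"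
    by (simp add: always_eventually)
  moreover have "((\<lambda>y. K * norm (y - x)) \<longlongrightarrow> K * norm (x - x)) (at x)" by (intro tendsto_intros)
  then have "((\<lambda>y. K * norm (y - x)) \<longlongrightarrow> 0) (at x)" by simp
  ultimately have "((\<lambda>y. (F y - F x - D (y - x)) /\<^sub>R norm (y - x)) \<longlongrightarrow> 0) (at x)"
    by (rule Lim_null_comparison)
  then show ?thesis using assms(1) unfolding has_derivative_at_within by blast
qed

locale regularized_conjugate = general_norm N for N :: "real^'n \<Rightarrow> real" +
  fixes h w :: "real^'n \<Rightarrow> ereal" and M \<alpha> :: real
  assumes h_closed: "eclosed h" and h_proper: "eproper h" and h_convex: "econvex h"
    and h_bounded: "bounded (edom h)"
    and w_nonneg: "\<And>x. 0 \<le> w x" and w_closed: "eclosed w"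
    and w_strongly_convex: "strongly_convex_on N 1 (edom h) w"
    and w_le: "\<And>x. x \<in> edom h \<Longrightarrow> w x \<le> ereal M"
    and \<alpha>_pos: "\<alpha> > 0"
begin

text \<open>H agrees with h + \<alpha> w only on edom h; elsewhere real_of_ereal turns \<infinity> into 0.\<close>
definition H :: "real^'n \<Rightarrow> real" where
  "H x = real_of_ereal (h x) + \<alpha> * real_of_ereal (w x)"

lemma edom_nonempty: "edom h \<noteq> {}"
  using h_proper unfolding eproper_def edom_def by auto

lemma edom_finiteE:
  assumes "x \<in> edom h"
  obtains a b where "h x = ereal a" "w x = ereal b" "0 \<le> b" "b \<le> M" "H x = a + \<alpha> * b"
proof -
  obtain a where "h x = ereal a" using assms h_proper unfolding eproper_def edom_def by (cases "h x") auto
  moreover obtain b where "w x = ereal b" "0 \<le> b" "b \<le> M"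
    using w_nonneg[of x] w_le[OF assms] by (cases "w x") auto
  ultimately show ?thesis using that unfolding H_def by simp
qed

lemma regularized_eq: "h x + ereal \<alpha> * w x = (if x \<in> edom h then ereal (H x) else \<infinity>)"
proof (cases "x \<in> edom h")
  case True
  then obtain a b where "h x = ereal a" "w x = ereal b" "H x = a + \<alpha> * b" by (rule edom_finiteE)
  then show ?thesis using True by simp
next
  case False
  then show ?thesis using w_nonneg[of x] \<alpha>_pos unfolding edom_def by (cases "w x") auto
qed

lemma edom_convex: "convex (edom h)"
  using w_strongly_convex unfolding strongly_convex_on_def by blast

lemma H_strongly_convex:
  assumes x: "x \<in> edom h" and y: "y \<in> edom h" and t: "0 \<le> t" "t \<le> 1"
  shows "H (t *\<^sub>R x + (1 - t) *\<^sub>R y) \<le> t * H x + (1 - t) * H y - \<alpha> / 2 * t * (1 - t) * (N (x - y))\<^sup>2"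
proof -
  define z where "z = t *\<^sub>R x + (1 - t) *\<^sub>R y"
  have z: "z \<in> edom h" using convexD[OF edom_convex x y] t unfolding z_def by simp
  obtain hx wx where x': "h x = ereal hx" "w x = ereal wx" "H x = hx + \<alpha> * wx" using edom_finiteE[OF x] by metis
  obtain hy wy where y': "h y = ereal hy" "w y = ereal wy" "H y = hy + \<alpha> * wy" using edom_finiteE[OF y] by metis
  obtain hz wz where z': "h z = ereal hz" "w z = ereal wz" "H z = hz + \<alpha> * wz" using edom_finiteE[OF z] by metis
  have "t *\<^sub>R (x, hx) + (1 - t) *\<^sub>R (y, hy) \<in> epi h"
    using h_convex x' y' t unfolding econvex_def by (intro convexD) (auto simp: epi_def)
  then have "hz \<le> t * hx + (1 - t) * hy" using z' unfolding z_def epi_def by simp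
  moreover have "w z \<le> ereal t * w x + ereal (1 - t) * w y - ereal (1 / 2 * t * (1 - t) * (N (x - y))\<^sup>2)"
    using w_strongly_convex x y t unfolding strongly_convex_on_def z_def by blast
  then have "\<alpha> * wz \<le> \<alpha> * (t * wx + (1 - t) * wy - 1 / 2 * t * (1 - t) * (N (x - y))\<^sup>2)"
    using x' y' z' \<alpha>_pos by simp
  ultimately show ?thesis unfolding z_def[symmetric] x' y' z' by (simp add: algebra_simps)
qed

text \<open>Sublevel sets of H - inner y, lifted by an upper bound r for w: their compactness needs only
  the closedness of epi h and epi w separately, not that of the epigraph of h + \<alpha> w.\<close>
definition lifted_sublevel :: "real^'n \<Rightarrow> real \<Rightarrow> ((real^'n) \<times> real) set" where
  "lifted_sublevel y c = {(x, r). w x \<le> ereal r \<and> r \<in> {0..M} \<and> h x \<le> ereal (c + y \<bullet> x - \<alpha> * r)}"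

lemma lifted_sublevel_edom: "(x, r) \<in> lifted_sublevel y c \<Longrightarrow> x \<in> edom h"
  unfolding lifted_sublevel_def edom_def by (auto intro: le_less_trans)

lemma lifted_sublevel_le:
  assumes "(x, r) \<in> lifted_sublevel y c"
  shows "H x - y \<bullet> x \<le> c"
proof -
  obtain a b where ab: "h x = ereal a" "w x = ereal b" "H x = a + \<alpha> * b"
    using edom_finiteE[OF lifted_sublevel_edom[OF assms]] by metis
  then have "b \<le> r" "a \<le> c + y \<bullet> x - \<alpha> * r" using assms unfolding lifted_sublevel_def by auto
  then show ?thesis using \<alpha>_pos ab(3) mult_left_mono[of b r \<alpha>] by linarith
qed

lemma in_lifted_sublevel:
  assumes "x \<in> edom h" "H x - y \<bullet> x \<le> c"
  shows "(x, real_of_ereal (w x)) \<in> lifted_sublevel y c"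
proof -
  obtain a b where "h x = ereal a" "w x = ereal b" "0 \<le> b" "b \<le> M" "H x = a + \<alpha> * b"
    using edom_finiteE[OF assms(1)] by metis
  then show ?thesis using assms(2) unfolding lifted_sublevel_def by simp
qed

lemma compact_lifted_sublevel: "compact (lifted_sublevel y c)"
proof -
  have eq: "lifted_sublevel y c
      = epi w \<inter> (UNIV \<times> {0..M}) \<inter> (\<lambda>(x, r). (x, c + y \<bullet> x - \<alpha> * r)) -` epi h"
    unfolding lifted_sublevel_def epi_def by auto
  have cont: "continuous_on UNIV (\<lambda>(x, r). (x, c + y \<bullet> x - \<alpha> * (r::real)))"
    by (simp add: case_prod_beta') (intro continuous_intros)
  have "closed (epi w)" "closed (epi h)" using w_closed h_closed unfolding eclosed_def by auto
  then have "closed (lifted_sublevel y c)" unfolding eq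
    by (intro closed_Int closed_Times closed_vimage closed_UNIV closed_atLeastAtMost cont)
  moreover have "lifted_sublevel y c \<subseteq> edom h \<times> {0..M}"
    using lifted_sublevel_edom unfolding lifted_sublevel_def by auto
  then have "bounded (lifted_sublevel y c)"
    using bounded_subset bounded_Times[OF h_bounded bounded_closed_interval] by blast
  ultimately show ?thesis by (simp add: compact_eq_bounded_closed)
qed

lemma exists_maximizer: "\<exists>x\<in>edom h. \<forall>x'\<in>edom h. y \<bullet> x' - H x' \<le> y \<bullet> x - H x"
proof -
  define c where "c x' = H x' - y \<bullet> x'" for x'
  let ?T = "(\<lambda>x'. lifted_sublevel y (c x')) ` edom h"
  have "\<Inter>?T \<noteq> {}"
  proof (rule compact_fip_Heine_Borel)
    show "compact S" if "S \<in> ?T" for S using that compact_lifted_sublevel by blast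
    fix \<F> assume fin: "finite \<F>" and sub: "\<F> \<subseteq> ?T"
    obtain A where A: "A \<subseteq> edom h" "finite A" "\<F> = (\<lambda>x'. lifted_sublevel y (c x')) ` A"
      using finite_subset_image[OF fin sub] by blast
    show "\<Inter>\<F> \<noteq> {}"
    proof (cases "A = {}")
      case False
      have "Min (c ` A) \<in> c ` A" using A(2) False by simp
      then obtain x0 where x0: "x0 \<in> A" "c x0 = Min (c ` A)" by (metis imageE)
      have "(x0, real_of_ereal (w x0)) \<in> lifted_sublevel y (c x')" if "x' \<in> A" for x'
        using in_lifted_sublevel[of x0 y "c x'"] x0 A(1,2) that unfolding c_def by auto
      then show ?thesis unfolding A(3) by blast
    qed (simp add: A(3))
  qed
  then obtain x r where xr: "(x, r) \<in> \<Inter>?T" by auto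
  obtain x1 where "x1 \<in> edom h" using edom_nonempty by blast
  then have "x \<in> edom h" using xr lifted_sublevel_edom by blast
  moreover have "y \<bullet> x' - H x' \<le> y \<bullet> x - H x" if "x' \<in> edom h" for x'
    using lifted_sublevel_le[of x r y "c x'"] xr that unfolding c_def by auto
  ultimately show ?thesis by blast
qed

definition maximizer :: "real^'n \<Rightarrow> real^'n" where
  "maximizer y = (SOME x. x \<in> edom h \<and> (\<forall>x'\<in>edom h. y \<bullet> x' - H x' \<le> y \<bullet> x - H x))"

definition H_conj :: "real^'n \<Rightarrow> real" where
  "H_conj y = y \<bullet> maximizer y - H (maximizer y)"

lemma maximizer_in_edom: "maximizer y \<in> edom h"
  and le_H_conj: "x \<in> edom h \<Longrightarrow> y \<bullet> x - H x \<le> H_conj y"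
  using someI_ex[OF exists_maximizer[of y, unfolded Bex_def]]
  unfolding maximizer_def[symmetric] H_conj_def by blast+

lemma conj_regularized: "conj (\<lambda>x. h x + ereal \<alpha> * w x) y = ereal (H_conj y)"
  unfolding conj_def regularized_eq
proof (rule antisym)
  show "(SUP x. ereal (y \<bullet> x) - (if x \<in> edom h then ereal (H x) else \<infinity>)) \<le> ereal (H_conj y)"
    using le_H_conj by (intro SUP_least) auto
  show "ereal (H_conj y) \<le> (SUP x. ereal (y \<bullet> x) - (if x \<in> edom h then ereal (H x) else \<infinity>))"
    using maximizer_in_edom by (intro SUP_upper2[of "maximizer y"]) (auto simp: H_conj_def)
qed

lemma quadratic_growth:
  assumes x: "x \<in> edom h"
  shows "H (maximizer y) + y \<bullet> (x - maximizer y) + \<alpha> / 2 * (N (x - maximizer y))\<^sup>2 \<le> H x"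
proof -
  define p where "p = maximizer y"
  define Q where "Q = H x - H p - y \<bullet> (x - p)"
  define c where "c = \<alpha> / 2 * (N (x - p))\<^sup>2"
  have key: "(1 - t) * c \<le> Q" if t: "0 < t" "t < 1" for t
  proof -
    have "y \<bullet> (t *\<^sub>R x + (1 - t) *\<^sub>R p) - H (t *\<^sub>R x + (1 - t) *\<^sub>R p) \<le> y \<bullet> p - H p"
      using le_H_conj convexD[OF edom_convex x maximizer_in_edom[of y]] t unfolding H_conj_def p_def by simp
    then have "t * ((1 - t) * c - Q) \<le> 0"
      using H_strongly_convex[OF x maximizer_in_edom[of y], of t] t unfolding Q_def c_def p_def
      by (simp add: inner_add_right inner_diff_right algebra_simps)
    then show ?thesis using t by (simp add: mult_le_0_iff)
  qed
  have "\<forall>\<^sub>F t in at_right 0. (1 - t) * c \<le> Q"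
    using eventually_at_right_real[of 0 1] key by (auto elim: eventually_mono)
  moreover have "((\<lambda>t. (1 - t) * c) \<longlongrightarrow> c) (at_right 0)"
    by (auto intro!: tendsto_eq_intros)
  ultimately have "c \<le> Q" by (intro tendsto_le[OF trivial_limit_at_right_real tendsto_const])
  then show ?thesis unfolding Q_def c_def p_def by simp
qed

lemma H_conj_ge: "H_conj y + (y' - y) \<bullet> maximizer y \<le> H_conj y'"
  using le_H_conj[OF maximizer_in_edom, of y' y] unfolding H_conj_def by (simp add: inner_diff_left)

lemma H_conj_le: "H_conj y' \<le> H_conj y + (y' - y) \<bullet> maximizer y + (dual_norm N (y' - y))\<^sup>2 / (2 * \<alpha>)"
proof -
  define d where "d = maximizer y' - maximizer y"
  have "H_conj y' \<le> H_conj y + (y' - y) \<bullet> maximizer y + ((y' - y) \<bullet> d - \<alpha> / 2 * (N d)\<^sup>2)"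
    using quadratic_growth[OF maximizer_in_edom, of y y'] unfolding H_conj_def d_def
    by (simp add: inner_diff_left inner_diff_right)
  also have "(y' - y) \<bullet> d - \<alpha> / 2 * (N d)\<^sup>2 \<le> dual_norm N (y' - y) * N d - \<alpha> / 2 * (N d)\<^sup>2"
    using inner_le_dual_norm_mult by simp
  also have "\<dots> \<le> (dual_norm N (y' - y))\<^sup>2 / (2 * \<alpha>)"
    using \<alpha>_pos sum_squares_ge_zero[of "dual_norm N (y' - y) - \<alpha> * N d" 0]
    by (simp add: field_simps power2_eq_square)
  finally show ?thesis by simp
qed

lemma H_conj_has_derivative: "(H_conj has_derivative (\<lambda>d. maximizer y \<bullet> d)) (at y)"
proof -
  obtain C where C: "\<And>a. dual_norm N a \<le> C * norm a" using dual_norm_le_norm by blast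
  have "\<bar>H_conj y' - H_conj y - maximizer y \<bullet> (y' - y)\<bar> \<le> C\<^sup>2 / (2 * \<alpha>) * (norm (y' - y))\<^sup>2" for y'
  proof -
    have "(dual_norm N (y' - y))\<^sup>2 \<le> (C * norm (y' - y))\<^sup>2"
      using C dual_norm_nonneg by (intro power_mono) auto
    then have "(dual_norm N (y' - y))\<^sup>2 / (2 * \<alpha>) \<le> C\<^sup>2 / (2 * \<alpha>) * (norm (y' - y))\<^sup>2"
      using \<alpha>_pos by (simp add: divide_right_mono power_mult_distrib)
    moreover have "0 \<le> (dual_norm N (y' - y))\<^sup>2 / (2 * \<alpha>)" using \<alpha>_pos by simp
    ultimately show ?thesis
      using H_conj_ge[of y y'] H_conj_le[of y' y] by (simp add: inner_commute abs_le_iff)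
  qed
  then show ?thesis by (rule has_derivative_of_quadratic_bound[OF bounded_linear_inner_right])
qed

end

section \<open>Generalised conditional gradient\<close>

lemma linear_convergence_of_descent:
  fixes e g :: "nat \<Rightarrow> real"
  assumes \<eta>: "0 < \<eta>" "\<eta> < 1" and e_nonneg: "\<And>k. 0 \<le> e k" and e_le_g: "\<And>k. e k \<le> g k"
    and descent: "\<And>k. e (Suc k) \<le> e k - \<eta> * g k"
  shows "g k \<le> (1 - \<eta>) ^ k * e 0 / \<eta>"
proof -
  have e_decay: "e k \<le> (1 - \<eta>) ^ k * e 0" for k
  proof (induction k)
    case (Suc k)
    have "e (Suc k) \<le> (1 - \<eta>) * e k"
      using descent[of k] mult_left_mono[OF e_le_g[of k] less_imp_le[OF \<eta>(1)]] by (simp add: algebra_simps)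
    also have "\<dots> \<le> (1 - \<eta>) * ((1 - \<eta>) ^ k * e 0)" using Suc \<eta> by (simp add: mult_left_mono)
    finally show ?case by simp
  qed simp
  have "\<eta> * g k \<le> e k" using descent[of k] e_nonneg[of "Suc k"] by simp
  then have "g k \<le> e k / \<eta>" using \<eta> by (simp add: field_simps)
  also have "\<dots> \<le> (1 - \<eta>) ^ k * e 0 / \<eta>" using e_decay[of k] \<eta> by (simp add: divide_right_mono)
  finally show ?thesis .
qed

lemma geometric_iteration_bound:
  fixes \<eta> e \<epsilon> :: real
  assumes \<eta>: "0 < \<eta>" "\<eta> < 1" and e: "0 \<le> e" and \<epsilon>: "0 < \<epsilon>"
    and k: "real k \<ge> (1 / \<eta>) * ln (1 + 2 * (1 / \<eta>) * e / \<epsilon>)"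
  shows "(1 - \<eta>) ^ k * e / \<eta> \<le> \<epsilon> / 2"
proof -
  define X where "X = 1 + 2 * (1 / \<eta>) * e / \<epsilon>"
  have X: "X \<ge> 1" unfolding X_def using \<eta> e \<epsilon> by simp
  have "(1 - \<eta>) ^ k \<le> exp (- \<eta>) ^ k"
    using exp_ge_add_one_self[of "- \<eta>"] \<eta> by (intro power_mono) auto
  also have "\<dots> = inverse (exp (\<eta> * real k))"
    by (simp add: exp_minus power_inverse mult.commute flip: exp_of_nat_mult)
  also have "\<dots> \<le> inverse X"
  proof -
    have "ln X \<le> \<eta> * real k" using k \<eta> unfolding X_def[symmetric] by (simp add: field_simps)
    then have "X \<le> exp (\<eta> * real k)" using X ln_le_cancel_iff[of X "exp (\<eta> * real k)"] by simp
    then show ?thesis using X by (simp add: le_imp_inverse_le)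
  qed
  finally have "(1 - \<eta>) ^ k * e / \<eta> \<le> inverse X * e / \<eta>"
    using e \<eta> by (simp add: divide_right_mono mult_right_mono)
  also have "\<dots> = (e / \<eta>) / X" by (simp add: divide_inverse_commute)
  also have "\<dots> \<le> \<epsilon> / 2"
  proof -
    have "e / \<eta> \<le> \<epsilon> / 2 * X" unfolding X_def using \<eta> \<epsilon> by (simp add: field_simps)
    then show ?thesis using X by (subst pos_divide_le_eq) auto
  qed
  finally show ?thesis .
qed

locale conditional_gradient = general_norm D for D :: "real^'n \<Rightarrow> real" +
  fixes \<Phi> :: "real^'n \<Rightarrow> real" and d\<Phi> :: "real^'n \<Rightarrow> real^'n" and F :: "real^'n \<Rightarrow> ereal"
    and \<alpha> L :: real
  assumes \<alpha>_pos: "\<alpha> > 0" and L_pos: "L > 0"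
    and \<Phi>_ge: "\<And>z v. \<Phi> z + d\<Phi> z \<bullet> (v - z) \<le> \<Phi> v"
    and \<Phi>_le: "\<And>z v. \<Phi> v \<le> \<Phi> z + d\<Phi> z \<bullet> (v - z) + (D (v - z))\<^sup>2 / (2 * \<alpha>)"
    and F_strongly_convex: "strongly_convex_on D (1 / L) UNIV F"
    and F_not_minf: "\<And>v. F v \<noteq> -\<infinity>"
begin

definition \<eta> :: real where "\<eta> = \<alpha> / (L + \<alpha>)"

definition objective :: "real^'n \<Rightarrow> ereal" where
  "objective v = ereal (\<Phi> v) + F v"

definition model :: "real^'n \<Rightarrow> real^'n \<Rightarrow> ereal" where
  "model z v = ereal (\<Phi> z + d\<Phi> z \<bullet> (v - z)) + F v"

lemma \<eta>_bounds: "0 < \<eta>" "\<eta> < 1"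
  unfolding \<eta>_def using \<alpha>_pos L_pos by auto

lemma model_le_objective: "model z v \<le> objective v"
  unfolding model_def objective_def using \<Phi>_ge by (intro add_right_mono) simp

lemma model_eq: "model x v = ereal (\<Phi> x - d\<Phi> x \<bullet> x) + (ereal (d\<Phi> x \<bullet> v) + F v)"
proof -
  have "\<Phi> x + d\<Phi> x \<bullet> (v - x) = (\<Phi> x - d\<Phi> x \<bullet> x) + d\<Phi> x \<bullet> v" by (simp add: inner_diff_right)
  then show ?thesis unfolding model_def by (simp only: add.assoc[symmetric] plus_ereal.simps(1))
qed

text \<open>The choice of \<eta> balances the curvature bounds of the two summands:
  \<eta>^2 / \<alpha> = \<eta> (1 - \<eta>) / L.\<close>
lemma objective_step:
  assumes a: "F z = ereal a" and b: "F u = ereal b"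
  shows "objective (\<eta> *\<^sub>R u + (1 - \<eta>) *\<^sub>R z) \<le> ereal (\<Phi> z + a - \<eta> * (a - b - d\<Phi> z \<bullet> (u - z)))"
proof -
  define z' where "z' = \<eta> *\<^sub>R u + (1 - \<eta>) *\<^sub>R z"
  define d where "d = D (u - z)"
  have "1 - \<eta> = L / (L + \<alpha>)" unfolding \<eta>_def using \<alpha>_pos L_pos by (simp add: field_simps)
  then have balance: "\<eta>\<^sup>2 / (2 * \<alpha>) = 1 / L / 2 * \<eta> * (1 - \<eta>)"
    unfolding \<eta>_def using \<alpha>_pos L_pos by (simp add: power2_eq_square)
  have "z' - z = \<eta> *\<^sub>R (u - z)" unfolding z'_def by (simp add: algebra_simps)
  then have "\<Phi> z' \<le> \<Phi> z + \<eta> * (d\<Phi> z \<bullet> (u - z)) + 1 / L / 2 * \<eta> * (1 - \<eta>) * d\<^sup>2"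
    using \<Phi>_le[of z' z] \<eta>_bounds unfolding d_def balance[symmetric] by (simp add: scaleR power_mult_distrib)
  moreover have "F z' \<le> ereal \<eta> * F u + ereal (1 - \<eta>) * F z - ereal (1 / L / 2 * \<eta> * (1 - \<eta>) * d\<^sup>2)"
    using F_strongly_convex \<eta>_bounds unfolding strongly_convex_on_def z'_def d_def by simp
  then have "F z' \<le> ereal (\<eta> * b + (1 - \<eta>) * a - 1 / L / 2 * \<eta> * (1 - \<eta>) * d\<^sup>2)"
    unfolding a b by simp
  ultimately have "objective z' \<le> ereal (\<Phi> z + \<eta> * (d\<Phi> z \<bullet> (u - z)) + 1 / L / 2 * \<eta> * (1 - \<eta>) * d\<^sup>2)
      + ereal (\<eta> * b + (1 - \<eta>) * a - 1 / L / 2 * \<eta> * (1 - \<eta>) * d\<^sup>2)"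
    unfolding objective_def by (intro add_mono) simp_all
  also have "\<dots> = ereal (\<Phi> z + a - \<eta> * (a - b - d\<Phi> z \<bullet> (u - z)))" by (simp add: algebra_simps)
  finally show ?thesis unfolding z'_def .
qed

end

locale conditional_gradient_run = conditional_gradient D \<Phi> d\<Phi> F \<alpha> L
  for D :: "real^'n \<Rightarrow> real" and \<Phi> d\<Phi> F \<alpha> L +
  fixes z zb :: "nat \<Rightarrow> real^'n"
  assumes start: "F (z 0) < \<infinity>"
    and argmin: "\<And>k v. ereal (d\<Phi> (z k) \<bullet> zb k) + F (zb k) \<le> ereal (d\<Phi> (z k) \<bullet> v) + F v"
    and step: "\<And>k. z (Suc k) = \<eta> *\<^sub>R zb k + (1 - \<eta>) *\<^sub>R z k"
begin

lemma F_finite: "F (z k) = ereal (real_of_ereal (F (z k)))" "F (zb k) = ereal (real_of_ereal (F (zb k)))"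
proof -
  have zb: "F (zb k) < \<infinity>" if "F (z k) = ereal a" for k a
    using argmin[of k "z k"] that by (cases "F (zb k)") auto
  have "F (z k) < \<infinity>"
  proof (induction k)
    case (Suc k)
    obtain a where a: "F (z k) = ereal a" using Suc F_not_minf by (cases "F (z k)") auto
    obtain b where b: "F (zb k) = ereal b" using zb[OF a] F_not_minf by (cases "F (zb k)") auto
    show ?case using objective_step[OF a b] unfolding objective_def step[symmetric]
      by (cases "F (z (Suc k))") auto
  qed (rule start)
  with zb show "F (z k) = ereal (real_of_ereal (F (z k)))" "F (zb k) = ereal (real_of_ereal (F (zb k)))"
    using F_not_minf by (cases "F (z k)"; cases "F (zb k)"; force)+
qed

definition iterate_value :: "nat \<Rightarrow> real" where
  "iterate_value k = \<Phi> (z k) + real_of_ereal (F (z k))"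

definition gap :: "nat \<Rightarrow> real" where
  "gap k = real_of_ereal (F (z k)) - real_of_ereal (F (zb k)) - d\<Phi> (z k) \<bullet> (zb k - z k)"

lemma objective_iterate: "objective (z k) = ereal (iterate_value k)"
  unfolding objective_def iterate_value_def by (subst F_finite) simp

lemma Inf_model: "(INF v. model (z k) v) = ereal (iterate_value k - gap k)"
proof -
  have "model (z k) (zb k) \<le> model (z k) v" for v
    unfolding model_eq by (intro add_left_mono argmin)
  then have "(INF v. model (z k) v) = model (z k) (zb k)"
    by (intro antisym INF_greatest INF_lower2[of "zb k"]) auto
  then show ?thesis unfolding model_def iterate_value_def gap_def by (subst (asm) F_finite) simp
qed

definition optimum :: real where
  "optimum = real_of_ereal (INF v. objective v)"

lemma Inf_objective: "(INF v. objective v) = ereal optimum"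
proof -
  have "ereal (iterate_value 0 - gap 0) \<le> (INF v. objective v)"
    unfolding Inf_model[symmetric] by (intro INF_mono) (use model_le_objective in blast)
  moreover have "(INF v. objective v) \<le> ereal (iterate_value 0)"
    using INF_lower[of "z 0" UNIV objective] objective_iterate by simp
  ultimately show ?thesis unfolding optimum_def by (cases "INF v. objective v") auto
qed

lemma optimum_le_iterate_value: "optimum \<le> iterate_value k"
  using INF_lower[of "z k" UNIV objective] unfolding Inf_objective objective_iterate by simp

lemma suboptimality_le_gap: "iterate_value k - optimum \<le> gap k"
proof -
  have "(INF v. model (z k) v) \<le> (INF v. objective v)"
    by (intro INF_mono) (use model_le_objective in blast)
  then show ?thesis unfolding Inf_model Inf_objective by simp
qed

lemma iterate_value_descent: "iterate_value (Suc k) \<le> iterate_value k - \<eta> * gap k"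
  using objective_step[OF F_finite(1) F_finite(2), of k k]
  unfolding step[symmetric] objective_iterate iterate_value_def gap_def by simp

lemma gap_linear_rate: "gap k \<le> (1 - \<eta>) ^ k * (iterate_value 0 - optimum) / \<eta>"
  using linear_convergence_of_descent[OF \<eta>_bounds, of "\<lambda>k. iterate_value k - optimum" gap]
    optimum_le_iterate_value suboptimality_le_gap iterate_value_descent by fastforce

theorem certificate_after:
  assumes \<epsilon>: "\<epsilon> > 0"
    and k: "real k \<ge> (1 + L / \<alpha>) *
      ln (1 + 2 * (1 + L / \<alpha>) * real_of_ereal (objective (z 0) - (INF v. objective v)) / \<epsilon>)"
  shows "objective (z k) - (INF v. model (z k) v) \<le> ereal (\<epsilon> / 2)"
proof -
  have "1 + L / \<alpha> = 1 / \<eta>" unfolding \<eta>_def using \<alpha>_pos L_pos by (simp add: field_simps)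
  have "(1 - \<eta>) ^ k * (iterate_value 0 - optimum) / \<eta> \<le> \<epsilon> / 2"
    using optimum_le_iterate_value[of 0] k unfolding objective_iterate Inf_objective \<open>1 + L / \<alpha> = 1 / \<eta>\<close>
    by (intro geometric_iteration_bound[OF \<eta>_bounds _ \<epsilon>]) simp_all
  then have "gap k \<le> \<epsilon> / 2" using gap_linear_rate[of k] by linarith
  then show ?thesis unfolding objective_iterate Inf_model by simp
qed

end

locale dual_problem = regularized_conjugate N h w M \<alpha> + smooth_function N f L
  for N :: "real^'n \<Rightarrow> real" and h w M \<alpha> f L

sublocale dual_problem \<subseteq> dual: conditional_gradient "dual_norm N" "\<lambda>v. H_conj (- v)"
  "\<lambda>v. - maximizer (- v)" "conj (\<lambda>x. ereal (f x))" \<alpha> L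
proof unfold_locales
  show "H_conj (- z) + - maximizer (- z) \<bullet> (v - z) \<le> H_conj (- v)" for z v
    using H_conj_ge[of "- z" "- v"] by (simp add: inner_diff_left inner_diff_right inner_commute)
  show "H_conj (- v) \<le> H_conj (- z) + - maximizer (- z) \<bullet> (v - z) + (dual_norm N (v - z))\<^sup>2 / (2 * \<alpha>)"
    for z v
    using H_conj_le[of "- v" "- z"] general_norm.commute[OF general_norm_dual_norm, of v z]
    by (simp add: inner_diff_left inner_diff_right inner_commute)
qed (use general_norm_dual_norm \<alpha>_pos L_pos conj_strongly_convex conj_real_not_minf
     in \<open>auto simp: general_norm_def\<close>)

theorem theorem3p3:
  fixes N :: "real^'n \<Rightarrow> real"
    and f :: "real^'n \<Rightarrow> real"
    and h w :: "real^'n \<Rightarrow> ereal"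
    and L M \<epsilon> :: real
    and z zb :: "nat \<Rightarrow> real^'n"
  assumes norm: "is_norm N"
    and f_convex: "convex_on UNIV f"
    and f_diff: "\<forall>x. f differentiable (at x)"
    and L_pos: "L > 0"
    and f_smooth: "\<forall>x y. dual_norm N (grad f x - grad f y) \<le> L * N (x - y)"
    and h_closed: "eclosed h" and h_proper: "eproper h" and h_convex: "econvex h"
    and h_bdd: "bounded (edom h)"
    and w_nonneg: "\<forall>x. w x \<ge> 0"
    and w_closed: "eclosed w"
    and w_sc: "strongly_convex_on N 1 (edom h) w"
    and M_max: "(\<forall>x\<in>edom h. w x \<le> ereal M) \<and> (\<exists>x\<in>edom h. w x = ereal M)"
    and M_pos: "M > 0"
    and eps_pos: "\<epsilon> > 0"
  defines "\<alpha> \<equiv> \<epsilon> / (2 * M)"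
  defines "\<eta> \<equiv> \<alpha> / (L + \<alpha>)"
  defines "h\<alpha> \<equiv> (\<lambda>x. h x + ereal \<alpha> * w x)"
  defines "fs \<equiv> conj (\<lambda>x. ereal (f x))"
  defines "\<psi> \<equiv> (\<lambda>v. conj h\<alpha> (- v) + fs v)"
  defines "G \<equiv> (\<lambda>k. grad (\<lambda>u. real_of_ereal (conj h\<alpha> u)) (- z k))"
  defines "\<Gamma> \<equiv> (\<lambda>k v. conj h\<alpha> (- z k) + ereal ((- G k) \<bullet> (v - z k)) + fs v)"
  assumes z0: "z 0 \<in> edom fs"
    and zb_argmin: "\<forall>k v. ereal ((- G k) \<bullet> zb k) + fs (zb k) \<le> ereal ((- G k) \<bullet> v) + fs v"
    and z_step: "\<forall>k. z (Suc k) = \<eta> *\<^sub>R zb k + (1 - \<eta>) *\<^sub>R z k"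
  shows "\<forall>k. real k \<ge> (1 + 2 * M * L / \<epsilon>) *
             ln (1 + 2 * (1 + 2 * M * L / \<epsilon>) * real_of_ereal (\<psi> (z 0) - (INF v. \<psi> v)) / \<epsilon>)
           \<longrightarrow> \<psi> (z k) - (INF v. \<Gamma> k v) \<le> ereal (\<epsilon> / 2)"
proof -
  have "\<alpha> > 0" unfolding \<alpha>_def using eps_pos M_pos by simp
  then interpret P: dual_problem N h w M \<alpha> f L
    using norm h_closed h_proper h_convex h_bdd w_nonneg w_closed w_sc M_max f_diff f_smooth L_pos
    by unfold_locales (auto simp: general_norm_def)
  have conj_h\<alpha>: "conj h\<alpha> = (\<lambda>y. ereal (P.H_conj y))"
    unfolding h\<alpha>_def using P.conj_regularized by blast
  have G: "G k = P.maximizer (- z k)" for k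
    unfolding G_def conj_h\<alpha> by (simp add: grad_eqI[OF P.H_conj_has_derivative])
  interpret C: conditional_gradient_run "dual_norm N" "\<lambda>v. P.H_conj (- v)" "\<lambda>v. - P.maximizer (- v)"
    "conj (\<lambda>x. ereal (f x))" \<alpha> L z zb
    by unfold_locales (use z0 zb_argmin z_step G in \<open>auto simp: edom_def fs_def P.dual.\<eta>_def \<eta>_def\<close>)
  have "\<psi> = P.dual.objective" "\<Gamma> k = P.dual.model (z k)" for k
    unfolding \<psi>_def \<Gamma>_def P.dual.objective_def P.dual.model_def conj_h\<alpha> G fs_def by auto
  moreover have "1 + 2 * M * L / \<epsilon> = 1 + L / \<alpha>" unfolding \<alpha>_def by simp
  ultimately show ?thesis using C.certificate_after[OF eps_pos] by simp
qed

end
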